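(* Let $F$ be a field of characteristic $2$, let $\mathfrak b$ be an anisotropic symmetric bilinear form over $F$, and let $\phi$ be a subform of the quasilinear quadratic form $\phi_{\mathfrak b}$. Then there exists a subform $\mathfrak c$ of $\mathfrak b$ with $\phi_{\mathfrak c}\simeq\phi$, and such a $\mathfrak c$ is unique up to isometry.
   Context: Symmetric bilinear forms are non-degenerate and finite-dimensional; $\phi_{\mathfrak b}(v)=\mathfrak b(v,v)$ is the quadratic form associated to $\mathfrak b$, which is quasilinear ($\phi(v+w)=\phi(v)+\phi(w)$). A subform of a symmetric bilinear form $\mathfrak b$ is a form isometric to an orthogonal summand of $\mathfrak b$. A subform of a quasilinear quadratic form $\phi$ is a quasilinear form $\psi$ with $\phi\simeq\psi\perp\sigma$ for some quasilinear quadratic form $\sigma$. *)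

theory Defs
  imports "Jordan_Normal_Form.Matrix" "Jordan_Normal_Form.Determinant"
begin

(* Symmetric bilinear forms on F^n, represented by their Gram matrices.
   By the paper's convention they are non-degenerate. *)
definition sym_bil_form :: "'a::field mat \<Rightarrow> bool" where
  "sym_bil_form B \<longleftrightarrow> B \<in> carrier_mat (dim_row B) (dim_row B) \<and> transpose_mat B = B \<and> det B \<noteq> 0"

definition bil_eval :: "'a::field mat \<Rightarrow> 'a vec \<Rightarrow> 'a vec \<Rightarrow> 'a" where
  "bil_eval B v w = v \<bullet> (B *\<^sub>v w)"

definition bil_anisotropic :: "'a::field mat \<Rightarrow> bool" where
  "bil_anisotropic B \<longleftrightarrow> (\<forall>v \<in> carrier_vec (dim_row B). v \<noteq> 0\<^sub>v (dim_row B) \<longrightarrow> bil_eval B v v \<noteq> 0)"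

definition bil_iso :: "'a::field mat \<Rightarrow> 'a mat \<Rightarrow> bool" where
  "bil_iso B C \<longleftrightarrow> dim_row B = dim_row C \<and>
     (\<exists>P \<in> carrier_mat (dim_row B) (dim_row B). invertible_mat P \<and> C = transpose_mat P * B * P)"

definition bil_osum :: "'a::field mat \<Rightarrow> 'a mat \<Rightarrow> 'a mat" where
  "bil_osum C D = four_block_mat C (0\<^sub>m (dim_row C) (dim_row D)) (0\<^sub>m (dim_row D) (dim_row C)) D"

definition bil_subform :: "'a::field mat \<Rightarrow> 'a mat \<Rightarrow> bool" where
  "bil_subform C B \<longleftrightarrow> sym_bil_form C \<and> (\<exists>D. sym_bil_form D \<and> bil_iso B (bil_osum C D))"

(* Quadratic forms on F^n: a pair (n, q) with q : F^n -> F (values outside carrier_vec n irrelevant) *)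
type_synonym 'a qform = "nat \<times> ('a vec \<Rightarrow> 'a)"

definition quad_form :: "'a::field qform \<Rightarrow> bool" where
  "quad_form Q \<longleftrightarrow> (case Q of (n, q) \<Rightarrow>
     (\<forall>a. \<forall>v \<in> carrier_vec n. q (a \<cdot>\<^sub>v v) = a^2 * q v) \<and>
     (\<forall>u \<in> carrier_vec n. \<forall>v \<in> carrier_vec n. \<forall>w \<in> carrier_vec n. \<forall>a b.
        q (a \<cdot>\<^sub>v u + b \<cdot>\<^sub>v v + w) - q (a \<cdot>\<^sub>v u + b \<cdot>\<^sub>v v) - q w
          = a * (q (u + w) - q u - q w) + b * (q (v + w) - q v - q w)))"

definition quasilinear :: "'a::field qform \<Rightarrow> bool" where
  "quasilinear Q \<longleftrightarrow> quad_form Q \<and> (case Q of (n, q) \<Rightarrow>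
     (\<forall>v \<in> carrier_vec n. \<forall>w \<in> carrier_vec n. q (v + w) = q v + q w))"

definition qf_iso :: "'a::field qform \<Rightarrow> 'a qform \<Rightarrow> bool" where
  "qf_iso Q S \<longleftrightarrow> fst Q = fst S \<and>
     (\<exists>P \<in> carrier_mat (fst Q) (fst Q). invertible_mat P \<and>
        (\<forall>v \<in> carrier_vec (fst Q). snd S v = snd Q (P *\<^sub>v v)))"

definition qf_osum :: "'a::field qform \<Rightarrow> 'a qform \<Rightarrow> 'a qform" where
  "qf_osum Q S = (fst Q + fst S,
     \<lambda>v. snd Q (vec (fst Q) (\<lambda>i. v $ i)) + snd S (vec (fst S) (\<lambda>i. v $ (fst Q + i))))"

definition ql_subform :: "'a::field qform \<Rightarrow> 'a qform \<Rightarrow> bool" where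
  "ql_subform Psi Phi \<longleftrightarrow> quasilinear Psi \<and> (\<exists>Sigma. quasilinear Sigma \<and> qf_iso Phi (qf_osum Psi Sigma))"

definition qf_of :: "'a::field mat \<Rightarrow> 'a qform" where
  "qf_of B = (dim_row B, \<lambda>v. bil_eval B v v)"

end

theory Submission
  imports Defs
begin

text \<open>
  Existence holds over any field: a subform \<open>\<phi>\<close> of \<open>\<phi>\<^sub>b\<close> is the restriction of \<open>\<phi>\<^sub>b\<close>
  to a subspace \<open>W\<close>. As \<open>b\<close> is anisotropic, so is \<open>b\<close> restricted to \<open>W\<close>; hence that
  restriction is nondegenerate, \<open>W\<close> splits off as an orthogonal summand, and it is the
  required \<open>c\<close>.

  Uniqueness uses characteristic 2: there \<open>\<phi>\<^sub>b\<close> is additive, so anisotropy makes it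
  injective. If \<open>c\<close> and \<open>d\<close> are subforms with \<open>\<phi>\<^sub>c \<simeq> \<phi>\<^sub>d\<close>, the embeddings of \<open>c\<close> and
  \<open>d\<close> into \<open>b\<close>, composed with that isometry, take the same \<open>\<phi>\<^sub>b\<close>-values and hence
  coincide; so the Gram matrices of \<open>c\<close> and \<open>d\<close> are congruent.
\<close>

lemma bil_eval_sym:
  fixes B :: "'a::field mat"
  assumes B: "B \<in> carrier_mat n n" and sym: "transpose_mat B = B"
    and x: "x \<in> carrier_vec n" and y: "y \<in> carrier_vec n"
  shows "bil_eval B x y = bil_eval B y x"
proof -
  have "bil_eval B y x = (transpose_mat B *\<^sub>v y) \<bullet> x"
    unfolding bil_eval_def using transpose_vec_mult_scalar[OF B x y] by simp
  also have "\<dots> = bil_eval B x y"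
    unfolding bil_eval_def sym using comm_scalar_prod[of x n "B *\<^sub>v y"] B x y by simp
  finally show ?thesis ..
qed

lemma bil_eval_congruence:
  fixes B :: "'a::field mat"
  assumes B: "B \<in> carrier_mat n n" and P: "P \<in> carrier_mat n k"
    and x: "x \<in> carrier_vec k" and y: "y \<in> carrier_vec k"
  shows "bil_eval (transpose_mat P * B * P) x y = bil_eval B (P *\<^sub>v x) (P *\<^sub>v y)"
proof -
  have "(transpose_mat P * B * P) *\<^sub>v y = (transpose_mat P * B) *\<^sub>v (P *\<^sub>v y)"
    using B P y by (intro assoc_mult_mat_vec[of _ k n]) auto
  also have "\<dots> = transpose_mat P *\<^sub>v (B *\<^sub>v (P *\<^sub>v y))"
    using B P y by (intro assoc_mult_mat_vec[of _ k n]) auto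
  finally have "(transpose_mat P * B * P) *\<^sub>v y = transpose_mat P *\<^sub>v (B *\<^sub>v (P *\<^sub>v y))" .
  then show ?thesis
    unfolding bil_eval_def
    using transpose_vec_mult_scalar[of "transpose_mat P" k n "B *\<^sub>v (P *\<^sub>v y)" x] B P x y by simp
qed

lemma mat_eq_if_bil_eval_eq:
  fixes A A' :: "'a::field mat"
  assumes A: "A \<in> carrier_mat r c" and A': "A' \<in> carrier_mat r c"
    and eq: "\<And>x y. x \<in> carrier_vec r \<Longrightarrow> y \<in> carrier_vec c \<Longrightarrow> bil_eval A x y = bil_eval A' x y"
  shows "A = A'"
proof (rule eq_matI)
  fix i j assume "i < dim_row A'" "j < dim_col A'"
  then have i: "i < r" and j: "j < c" using A' by auto
  have "A $$ (i, j) = bil_eval A (unit_vec r i) (unit_vec c j)"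
    using A i j by (simp add: bil_eval_def)
  also have "\<dots> = bil_eval A' (unit_vec r i) (unit_vec c j)"
    by (rule eq) simp_all
  also have "\<dots> = A' $$ (i, j)"
    using A' i j by (simp add: bil_eval_def)
  finally show "A $$ (i, j) = A' $$ (i, j)" .
qed (simp_all add: carrier_matD[OF A] carrier_matD[OF A'])

lemma mat_eq_if_mult_mat_vec_eq:
  fixes A A' :: "'a::field mat"
  assumes "A \<in> carrier_mat r c" "A' \<in> carrier_mat r c"
    and "\<And>v. v \<in> carrier_vec c \<Longrightarrow> A *\<^sub>v v = A' *\<^sub>v v"
  shows "A = A'"
  by (rule mat_eq_if_bil_eval_eq[OF assms(1,2)]) (simp add: bil_eval_def assms(3))

lemma transpose_mult_congruence:
  fixes B :: "'a::field mat"
  assumes B: "B \<in> carrier_mat n n" and P: "P \<in> carrier_mat n k" and Q: "Q \<in> carrier_mat k l"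
  shows "transpose_mat (P * Q) * B * (P * Q) = transpose_mat Q * (transpose_mat P * B * P) * Q"
proof (rule mat_eq_if_bil_eval_eq[of _ l l])
  fix x y :: "'a vec" assume x: "x \<in> carrier_vec l" and y: "y \<in> carrier_vec l"
  have PQ: "P * Q \<in> carrier_mat n l" and PBP: "transpose_mat P * B * P \<in> carrier_mat k k"
    using B P Q by auto
  have Qx: "Q *\<^sub>v x \<in> carrier_vec k" and Qy: "Q *\<^sub>v y \<in> carrier_vec k"
    using Q x y by auto
  have "bil_eval (transpose_mat (P * Q) * B * (P * Q)) x y
      = bil_eval B ((P * Q) *\<^sub>v x) ((P * Q) *\<^sub>v y)"
    by (rule bil_eval_congruence[OF B PQ x y])
  also have "\<dots> = bil_eval B (P *\<^sub>v (Q *\<^sub>v x)) (P *\<^sub>v (Q *\<^sub>v y))"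
    using P Q x y by simp
  also have "\<dots> = bil_eval (transpose_mat P * B * P) (Q *\<^sub>v x) (Q *\<^sub>v y)"
    by (rule bil_eval_congruence[OF B P Qx Qy, symmetric])
  also have "\<dots> = bil_eval (transpose_mat Q * (transpose_mat P * B * P) * Q) x y"
    by (rule bil_eval_congruence[OF PBP Q x y, symmetric])
  finally show "bil_eval (transpose_mat (P * Q) * B * (P * Q)) x y
      = bil_eval (transpose_mat Q * (transpose_mat P * B * P) * Q) x y" .
qed (use B P Q in auto)

lemma mult_mat_zero_vec:
  "A \<in> carrier_mat r c \<Longrightarrow> A *\<^sub>v 0\<^sub>v c = 0\<^sub>v r"
  by (rule eq_vecI) auto

lemma bil_eval_four_block_append_zero:
  fixes A1 :: "'a::field mat"
  assumes A: "A1 \<in> carrier_mat k k" "A2 \<in> carrier_mat k m"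
    "A3 \<in> carrier_mat m k" "A4 \<in> carrier_mat m m"
    and x: "x \<in> carrier_vec k" and y: "y \<in> carrier_vec k"
  shows "bil_eval (four_block_mat A1 A2 A3 A4) (x @\<^sub>v 0\<^sub>v m) (y @\<^sub>v 0\<^sub>v m) = bil_eval A1 x y"
proof -
  have "four_block_mat A1 A2 A3 A4 *\<^sub>v (y @\<^sub>v 0\<^sub>v m)
      = (A1 *\<^sub>v y + A2 *\<^sub>v 0\<^sub>v m) @\<^sub>v (A3 *\<^sub>v y + A4 *\<^sub>v 0\<^sub>v m)"
    by (rule four_block_mat_mult_vec[OF A y]) simp
  also have "\<dots> = (A1 *\<^sub>v y) @\<^sub>v (A3 *\<^sub>v y)"
    using A y by (simp add: mult_mat_zero_vec)
  finally show ?thesis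
    unfolding bil_eval_def using A x y by (simp add: scalar_prod_append[of x k "0\<^sub>v m" m])
qed

lemma symmetric_four_block_mat:
  fixes A1 :: "'a::field mat"
  assumes A: "A1 \<in> carrier_mat k k" "A2 \<in> carrier_mat k m"
    "A3 \<in> carrier_mat m k" "A4 \<in> carrier_mat m m"
    and sym: "transpose_mat (four_block_mat A1 A2 A3 A4) = four_block_mat A1 A2 A3 A4"
  shows "transpose_mat A1 = A1" and "A3 = transpose_mat A2" and "transpose_mat A4 = A4"
proof -
  let ?F = "four_block_mat A1 A2 A3 A4"
  have F: "?F $$ (j, i) = ?F $$ (i, j)" if "i < k + m" "j < k + m" for i j
    using arg_cong[OF sym, of "\<lambda>M. M $$ (i, j)"] that A by simp
  show "transpose_mat A1 = A1"
  proof (rule eq_matI)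
    fix i j assume "i < dim_row A1" "j < dim_col A1"
    then show "transpose_mat A1 $$ (i, j) = A1 $$ (i, j)" using F[of i j] A by simp
  qed (use A in simp_all)
  show "A3 = transpose_mat A2"
  proof (rule eq_matI)
    fix i j assume "i < dim_row (transpose_mat A2)" "j < dim_col (transpose_mat A2)"
    then show "A3 $$ (i, j) = transpose_mat A2 $$ (i, j)" using F[of j "k + i"] A by simp
  qed (use A in simp_all)
  show "transpose_mat A4 = A4"
  proof (rule eq_matI)
    fix i j assume "i < dim_row A4" "j < dim_col A4"
    then show "transpose_mat A4 $$ (i, j) = A4 $$ (i, j)" using F[of "k + i" "k + j"] A by simp
  qed (use A in simp_all)
qed

lemma sym_mat_four_blockE:
  fixes M :: "'a::field mat"
  assumes M: "M \<in> carrier_mat (k + m) (k + m)" and sym: "transpose_mat M = M"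
  obtains C X E where "C \<in> carrier_mat k k" and "X \<in> carrier_mat k m" and "E \<in> carrier_mat m m"
    and "transpose_mat C = C" and "M = four_block_mat C X (transpose_mat X) E"
proof -
  obtain C X Y E where "split_block M k k = (C, X, Y, E)" by (cases "split_block M k k")
  then have C: "C \<in> carrier_mat k k" and X: "X \<in> carrier_mat k m" and Y: "Y \<in> carrier_mat m k"
    and E: "E \<in> carrier_mat m m" and M4: "M = four_block_mat C X Y E"
    using split_block[of M k k C X Y E m m] M by auto
  have "transpose_mat C = C" and "Y = transpose_mat X"
    using symmetric_four_block_mat[OF C X Y E] sym unfolding M4 by auto
  then show thesis using that[OF C X E] M4 by simp
qed

lemma invertible_matE:
  fixes A :: "'a::field mat"
  assumes A: "A \<in> carrier_mat n n" and "invertible_mat A"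
  obtains A' where "A' \<in> carrier_mat n n" "A * A' = 1\<^sub>m n" "A' * A = 1\<^sub>m n"
proof -
  obtain A' where AA': "A * A' = 1\<^sub>m n" and A'A: "A' * A = 1\<^sub>m (dim_row A')"
    using assms unfolding invertible_mat_def inverts_mat_def by auto
  have "A' \<in> carrier_mat n n"
    using arg_cong[OF AA', of dim_col] arg_cong[OF A'A, of dim_col] A by auto
  with AA' A'A show thesis using that by auto
qed

lemma invertible_mat_iff_det_nonzero:
  fixes A :: "'a::field mat"
  assumes A: "A \<in> carrier_mat n n"
  shows "invertible_mat A \<longleftrightarrow> det A \<noteq> 0"
proof
  assume "invertible_mat A"
  then obtain A' where A': "A' \<in> carrier_mat n n" and "A * A' = 1\<^sub>m n"
    using invertible_matE[OF A] by blast
  then have "det A * det A' = 1" using det_mult[OF A A'] by simp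
  then show "det A \<noteq> 0" by auto
next
  assume "det A \<noteq> 0"
  from det_non_zero_imp_unit[OF A this, of "()"]
  obtain A' where "A' \<in> carrier_mat n n" "A * A' = 1\<^sub>m n" "A' * A = 1\<^sub>m n"
    unfolding Units_def ring_mat_def by auto
  then show "invertible_mat A"
    using A unfolding invertible_mat_def inverts_mat_def by auto
qed

lemma invertible_mat_mult:
  fixes A B :: "'a::field mat"
  assumes "A \<in> carrier_mat n n" "B \<in> carrier_mat n n" "invertible_mat A" "invertible_mat B"
  shows "invertible_mat (A * B)"
proof -
  have "det A \<noteq> 0" "det B \<noteq> 0" using assms invertible_mat_iff_det_nonzero by blast+
  then have "det (A * B) \<noteq> 0" using det_mult[OF assms(1,2)] by simp
  then show ?thesis using invertible_mat_iff_det_nonzero[of "A * B" n] assms(1,2) by auto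
qed

lemma invertible_mat_mult_vec_eq_zero:
  fixes A :: "'a::field mat"
  assumes A: "A \<in> carrier_mat n n" "invertible_mat A"
    and v: "v \<in> carrier_vec n" and Av: "A *\<^sub>v v = 0\<^sub>v n"
  shows "v = 0\<^sub>v n"
proof -
  obtain A' where A': "A' \<in> carrier_mat n n" "A' * A = 1\<^sub>m n"
    using invertible_matE[OF A] by blast
  have "v = (A' * A) *\<^sub>v v" unfolding A'(2) using v by simp
  also have "\<dots> = A' *\<^sub>v (A *\<^sub>v v)" using A(1) A'(1) v by simp
  also have "\<dots> = 0\<^sub>v n" unfolding Av using A'(1) by auto
  finally show ?thesis .
qed

lemma bil_iso_congruence:
  assumes "B \<in> carrier_mat n n" "P \<in> carrier_mat n n" "invertible_mat P"
  shows "bil_iso B (transpose_mat P * B * P)"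
  using assms unfolding bil_iso_def by auto

lemma bil_iso_trans:
  fixes A :: "'a::field mat"
  assumes A: "A \<in> carrier_mat n n" and "bil_iso A B" and "bil_iso B C"
  shows "bil_iso A C"
proof -
  have "dim_row A = n" using A by simp
  then obtain P where P: "P \<in> carrier_mat n n" "invertible_mat P" and B: "B = transpose_mat P * A * P"
    using assms(2) unfolding bil_iso_def by blast
  have "dim_row B = n" using A P B by simp
  then obtain Q where Q: "Q \<in> carrier_mat n n" "invertible_mat Q" and C: "C = transpose_mat Q * B * Q"
    using assms(3) unfolding bil_iso_def by blast
  have PQ: "P * Q \<in> carrier_mat n n" using P Q by simp
  have "C = transpose_mat (P * Q) * A * (P * Q)"
    unfolding C B by (rule transpose_mult_congruence[OF A P(1) Q(1), symmetric])
  with bil_iso_congruence[OF A PQ invertible_mat_mult[OF P(1) Q(1) P(2) Q(2)]] show ?thesis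
    by simp
qed

lemma sym_bil_form_bil_iso:
  fixes B :: "'a::field mat"
  assumes "sym_bil_form B" and "bil_iso B C"
  shows "sym_bil_form C"
proof -
  define n where "n = dim_row B"
  have B: "B \<in> carrier_mat n n" and sym: "transpose_mat B = B" and det: "det B \<noteq> 0"
    using assms(1) unfolding sym_bil_form_def n_def by auto
  obtain P where P: "P \<in> carrier_mat n n" "invertible_mat P" and C: "C = transpose_mat P * B * P"
    using assms(2) unfolding bil_iso_def n_def by blast
  have C_carrier: "C \<in> carrier_mat n n" using B P C by simp
  have "transpose_mat C = transpose_mat (transpose_mat P * (B * P))"
    unfolding C using B P by simp
  also have "\<dots> = transpose_mat (B * P) * P"
    using transpose_mult[of "transpose_mat P" n n "B * P" n] B P by simp
  also have "\<dots> = C"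
    unfolding C transpose_mult[OF B P(1)] sym ..
  finally have "transpose_mat C = C" .
  moreover have "det C = det P * det B * det P"
    unfolding C using B P by (simp add: det_mult[of _ n] det_transpose)
  then have "det C \<noteq> 0" using det P invertible_mat_iff_det_nonzero by auto
  ultimately show ?thesis using C_carrier unfolding sym_bil_form_def by simp
qed

lemma bil_anisotropic_congruence:
  fixes B :: "'a::field mat"
  assumes B: "B \<in> carrier_mat n n" and aniso: "bil_anisotropic B"
    and P: "P \<in> carrier_mat n n" "invertible_mat P"
  shows "bil_anisotropic (transpose_mat P * B * P)"
  unfolding bil_anisotropic_def
proof (intro ballI impI)
  fix v :: "'a vec" assume "v \<in> carrier_vec (dim_row (transpose_mat P * B * P))"
    and v0: "v \<noteq> 0\<^sub>v (dim_row (transpose_mat P * B * P))"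
  then have v: "v \<in> carrier_vec n" and v0: "v \<noteq> 0\<^sub>v n" using P by auto
  then have "P *\<^sub>v v \<noteq> 0\<^sub>v n" using invertible_mat_mult_vec_eq_zero[OF P] by blast
  moreover have "P *\<^sub>v v \<in> carrier_vec (dim_row B)" using B P v by simp
  ultimately have "bil_eval B (P *\<^sub>v v) (P *\<^sub>v v) \<noteq> 0"
    using aniso B unfolding bil_anisotropic_def by auto
  then show "bil_eval (transpose_mat P * B * P) v v \<noteq> 0"
    using bil_eval_congruence[OF B P(1) v v] by simp
qed

lemma qf_iso_eq_on_carrier:
  assumes "\<And>v. v \<in> carrier_vec n \<Longrightarrow> q' v = q v"
  shows "qf_iso (n, q) (n, q')"
proof -
  have "invertible_mat (1\<^sub>m n :: 'a::field mat)"
    using invertible_mat_iff_det_nonzero[of "1\<^sub>m n" n] by simp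
  then show ?thesis unfolding qf_iso_def using assms by force
qed

lemma qf_iso_sym:
  fixes Q :: "'a::field qform"
  assumes "qf_iso Q S"
  shows "qf_iso S Q"
proof -
  obtain P where P: "P \<in> carrier_mat (fst Q) (fst Q)" "invertible_mat P"
    and S: "\<And>v. v \<in> carrier_vec (fst Q) \<Longrightarrow> snd S v = snd Q (P *\<^sub>v v)"
    using assms unfolding qf_iso_def by auto
  obtain P' where P': "P' \<in> carrier_mat (fst Q) (fst Q)" "P * P' = 1\<^sub>m (fst Q)" "P' * P = 1\<^sub>m (fst Q)"
    using invertible_matE[OF P] by blast
  have "det P * det P' = 1" using det_mult[OF P(1) P'(1)] P'(2) by simp
  then have "invertible_mat P'" using invertible_mat_iff_det_nonzero[OF P'(1)] by auto
  moreover have "snd Q v = snd S (P' *\<^sub>v v)" if v: "v \<in> carrier_vec (fst Q)" for v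
    using S[of "P' *\<^sub>v v"] P P' v by (simp flip: assoc_mult_mat_vec[of _ "fst Q" "fst Q"])
  ultimately show ?thesis using assms P' unfolding qf_iso_def by auto
qed

lemma qf_iso_trans:
  fixes Q :: "'a::field qform"
  assumes "qf_iso Q R" and "qf_iso R S"
  shows "qf_iso Q S"
proof -
  obtain P where P: "P \<in> carrier_mat (fst Q) (fst Q)" "invertible_mat P"
    and R: "\<And>v. v \<in> carrier_vec (fst Q) \<Longrightarrow> snd R v = snd Q (P *\<^sub>v v)"
    using assms(1) unfolding qf_iso_def by auto
  obtain P' where P': "P' \<in> carrier_mat (fst Q) (fst Q)" "invertible_mat P'"
    and S: "\<And>v. v \<in> carrier_vec (fst Q) \<Longrightarrow> snd S v = snd R (P' *\<^sub>v v)"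
    using assms unfolding qf_iso_def by auto
  have "snd S v = snd Q ((P * P') *\<^sub>v v)" if v: "v \<in> carrier_vec (fst Q)" for v
    using S[OF v] R[of "P' *\<^sub>v v"] P P' v by simp
  then show ?thesis
    using assms P P' invertible_mat_mult[OF P(1) P'(1) P(2) P'(2)] unfolding qf_iso_def by auto
qed

section \<open>Splitting off an anisotropic block\<close>

lemma bil_anisotropic_imp_det_nonzero:
  fixes A :: "'a::field mat"
  assumes A: "A \<in> carrier_mat n n" and aniso: "bil_anisotropic A"
  shows "det A \<noteq> 0"
proof
  assume "det A = 0"
  then obtain v where v: "v \<in> carrier_vec n" "v \<noteq> 0\<^sub>v n" "A *\<^sub>v v = 0\<^sub>v n"
    using det_0_iff_vec_prod_zero_field[OF A] by auto
  then have "bil_eval A v v = 0" unfolding bil_eval_def by simp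
  with v aniso A show False unfolding bil_anisotropic_def by auto
qed

lemma bil_anisotropic_four_block_upper_left:
  fixes A1 :: "'a::field mat"
  assumes A: "A1 \<in> carrier_mat k k" "A2 \<in> carrier_mat k m"
    "A3 \<in> carrier_mat m k" "A4 \<in> carrier_mat m m"
    and aniso: "bil_anisotropic (four_block_mat A1 A2 A3 A4)"
  shows "bil_anisotropic A1"
  unfolding bil_anisotropic_def
proof (intro ballI impI)
  fix w :: "'a vec" assume "w \<in> carrier_vec (dim_row A1)" and "w \<noteq> 0\<^sub>v (dim_row A1)"
  then have w: "w \<in> carrier_vec k" and w0: "w \<noteq> 0\<^sub>v k" using A by auto
  have "w @\<^sub>v 0\<^sub>v m \<noteq> 0\<^sub>v k @\<^sub>v 0\<^sub>v m" using w w0 by simp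
  moreover have "0\<^sub>v k @\<^sub>v 0\<^sub>v m = (0\<^sub>v (k + m) :: 'a vec)" by (intro eq_vecI) auto
  ultimately have "bil_eval (four_block_mat A1 A2 A3 A4) (w @\<^sub>v 0\<^sub>v m) (w @\<^sub>v 0\<^sub>v m) \<noteq> 0"
    using aniso w A unfolding bil_anisotropic_def by auto
  then show "bil_eval A1 w w \<noteq> 0" using bil_eval_four_block_append_zero[OF A w w] by simp
qed

lemma sym_bil_form_bil_osum:
  fixes C :: "'a::field mat"
  assumes C: "C \<in> carrier_mat k k" and D: "D \<in> carrier_mat m m" and "sym_bil_form (bil_osum C D)"
  shows "sym_bil_form C" and "sym_bil_form D"
proof -
  have osum: "bil_osum C D = four_block_mat C (0\<^sub>m k m) (0\<^sub>m m k) D"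
    unfolding bil_osum_def using C D by simp
  have "transpose_mat (bil_osum C D) = bil_osum C D" "det (bil_osum C D) \<noteq> 0"
    using assms(3) unfolding sym_bil_form_def by auto
  then have "transpose_mat C = C" "transpose_mat D = D" "det C * det D \<noteq> 0"
    using symmetric_four_block_mat[OF C zero_carrier_mat zero_carrier_mat D]
      det_four_block_mat_lower_left_zero[OF C zero_carrier_mat refl D]
    unfolding osum by simp_all
  then show "sym_bil_form C" "sym_bil_form D" using C D unfolding sym_bil_form_def by auto
qed

lemma four_block_mat_unipotent_congruence:
  fixes C :: "'a::field mat"
  assumes C: "C \<in> carrier_mat k k" and X: "X \<in> carrier_mat k m" and E: "E \<in> carrier_mat m m"
    and Y: "Y \<in> carrier_mat k m" and CY: "C * Y = X" and YC: "transpose_mat Y * C = transpose_mat X"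
  defines "T \<equiv> four_block_mat (1\<^sub>m k) (- Y) (0\<^sub>m m k) (1\<^sub>m m)"
  shows "transpose_mat T * four_block_mat C X (transpose_mat X) E * T
    = four_block_mat C (0\<^sub>m k m) (0\<^sub>m m k) (E - transpose_mat X * Y)"
proof -
  let ?M = "four_block_mat C X (transpose_mat X) E"
  let ?E' = "E - transpose_mat X * Y"
  have T: "T \<in> carrier_mat (k + m) (k + m)" and E': "?E' \<in> carrier_mat m m"
    using X Y E unfolding T_def by auto
  have MT: "?M * T = four_block_mat C (0\<^sub>m k m) (transpose_mat X) ?E'"
    unfolding T_def
  proof (subst mult_four_block_mat[OF C X _ E one_carrier_mat _ zero_carrier_mat one_carrier_mat])
    show "four_block_mat (C * 1\<^sub>m k + X * 0\<^sub>m m k) (C * - Y + X * 1\<^sub>m m)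
        (transpose_mat X * 1\<^sub>m k + E * 0\<^sub>m m k) (transpose_mat X * - Y + E * 1\<^sub>m m)
      = four_block_mat C (0\<^sub>m k m) (transpose_mat X) ?E'"
      using C X Y E unfolding CY[symmetric]
      by (intro cong_four_block_mat) (auto simp: add_uminus_minus_mat comm_add_mat[of _ m m])
  qed (use X Y in auto)
  have tT: "transpose_mat T = four_block_mat (1\<^sub>m k) (0\<^sub>m k m) (- transpose_mat Y) (1\<^sub>m m)"
    unfolding T_def transpose_four_block_mat[OF one_carrier_mat uminus_carrier_mat[OF Y]
        zero_carrier_mat one_carrier_mat]
    by (simp add: transpose_uminus)
  have "transpose_mat T * ?M * T = transpose_mat T * (?M * T)"
    using T C X E by (simp add: assoc_mult_mat[of _ "k + m" "k + m" _ "k + m" _ "k + m"])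
  also have "\<dots> = four_block_mat C (0\<^sub>m k m) (0\<^sub>m m k) ?E'"
    unfolding MT tT
  proof (subst mult_four_block_mat[OF one_carrier_mat zero_carrier_mat _ one_carrier_mat C
        zero_carrier_mat _ E'])
    show "four_block_mat (1\<^sub>m k * C + 0\<^sub>m k m * transpose_mat X) (1\<^sub>m k * 0\<^sub>m k m + 0\<^sub>m k m * ?E')
        (- transpose_mat Y * C + 1\<^sub>m m * transpose_mat X) (- transpose_mat Y * 0\<^sub>m k m + 1\<^sub>m m * ?E')
      = four_block_mat C (0\<^sub>m k m) (0\<^sub>m m k) ?E'"
      using C X Y E' YC by (intro cong_four_block_mat) auto
  qed (use X Y in auto)
  finally show ?thesis .
qed

text \<open>Congruence by the block row operation with \<open>Y = C\<inverse> X\<close> leaves the Schur complement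
  \<open>E - X\<^sup>T C\<inverse> X\<close> in the lower right corner.\<close>

lemma sym_four_block_mat_split:
  fixes C :: "'a::field mat"
  assumes C: "C \<in> carrier_mat k k" and X: "X \<in> carrier_mat k m" and E: "E \<in> carrier_mat m m"
    and symC: "transpose_mat C = C" and detC: "det C \<noteq> 0"
  obtains E' where "E' \<in> carrier_mat m m"
    and "bil_iso (four_block_mat C X (transpose_mat X) E) (four_block_mat C (0\<^sub>m k m) (0\<^sub>m m k) E')"
proof -
  obtain C' where C': "C' \<in> carrier_mat k k" "C * C' = 1\<^sub>m k"
    using invertible_matE[OF C] invertible_mat_iff_det_nonzero[OF C] detC by metis
  define Y where "Y = C' * X"
  define T where "T = four_block_mat (1\<^sub>m k) (- Y) (0\<^sub>m m k) (1\<^sub>m m)"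
  have Y: "Y \<in> carrier_mat k m" and T: "T \<in> carrier_mat (k + m) (k + m)"
    using C' X unfolding Y_def T_def by auto
  have CY: "C * Y = X"
    unfolding Y_def using C C' X by (simp flip: assoc_mult_mat[of C k k C' k X m])
  have YC: "transpose_mat Y * C = transpose_mat X"
    using transpose_mult[OF C Y] symC unfolding CY by simp
  have "det T = 1"
    unfolding T_def using det_four_block_mat_lower_left_zero[of "1\<^sub>m k" k "- Y" m] Y by simp
  then have "invertible_mat T" using invertible_mat_iff_det_nonzero[OF T] by simp
  moreover have "four_block_mat C X (transpose_mat X) E \<in> carrier_mat (k + m) (k + m)"
    using C X E by simp
  ultimately have "bil_iso (four_block_mat C X (transpose_mat X) E)
      (four_block_mat C (0\<^sub>m k m) (0\<^sub>m m k) (E - transpose_mat X * Y))"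
    using bil_iso_congruence[OF _ T] four_block_mat_unipotent_congruence[OF C X E Y CY YC]
    unfolding T_def by metis
  moreover have "E - transpose_mat X * Y \<in> carrier_mat m m" using E X Y by auto
  ultimately show thesis using that by blast
qed

section \<open>Existence of the subform\<close>

lemma bil_subform_gram:
  fixes B C :: "'a::field mat"
  assumes sub: "bil_subform C B" and B: "B \<in> carrier_mat n n"
  obtains G where "G \<in> carrier_mat n (dim_row C)" and "C = transpose_mat G * B * G"
proof -
  define k where "k = dim_row C"
  obtain D where "sym_bil_form C" "sym_bil_form D" and iso: "bil_iso B (bil_osum C D)"
    using sub unfolding bil_subform_def by blast
  define m where "m = dim_row D"
  have C: "C \<in> carrier_mat k k" and D: "D \<in> carrier_mat m m"
    using \<open>sym_bil_form C\<close> \<open>sym_bil_form D\<close> unfolding sym_bil_form_def k_def m_def by auto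
  have osum: "bil_osum C D = four_block_mat C (0\<^sub>m k m) (0\<^sub>m m k) D"
    unfolding bil_osum_def k_def m_def ..
  obtain P where P: "P \<in> carrier_mat (dim_row B) (dim_row B)"
    and PBP: "bil_osum C D = transpose_mat P * B * P" and dims: "dim_row B = dim_row (bil_osum C D)"
    using iso unfolding bil_iso_def by blast
  have P: "P \<in> carrier_mat n n" using P B by simp
  have n: "n = k + m" using dims B C D unfolding osum by simp
  have O: "bil_osum C D \<in> carrier_mat n n" unfolding osum n using C D by simp
  define J :: "'a mat" where "J = 1\<^sub>m k @\<^sub>r 0\<^sub>m m k"
  have J: "J \<in> carrier_mat n k" unfolding J_def n by auto
  have Jx: "J *\<^sub>v x = x @\<^sub>v 0\<^sub>v m" if "x \<in> carrier_vec k" for x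
  proof -
    have "0\<^sub>m m k *\<^sub>v x = 0\<^sub>v m" using that by (intro eq_vecI) auto
    then show ?thesis
      unfolding J_def using mat_mult_append[OF one_carrier_mat zero_carrier_mat that] that by simp
  qed
  have "C = transpose_mat J * bil_osum C D * J"
  proof (rule mat_eq_if_bil_eval_eq[of _ k k])
    fix x y :: "'a vec" assume x: "x \<in> carrier_vec k" and y: "y \<in> carrier_vec k"
    have "bil_eval (transpose_mat J * bil_osum C D * J) x y
        = bil_eval (bil_osum C D) (J *\<^sub>v x) (J *\<^sub>v y)"
      by (rule bil_eval_congruence[OF O J x y])
    also have "\<dots> = bil_eval C x y"
      unfolding Jx[OF x] Jx[OF y] osum
      by (rule bil_eval_four_block_append_zero[OF C zero_carrier_mat zero_carrier_mat D x y])
    finally show "bil_eval C x y = bil_eval (transpose_mat J * bil_osum C D * J) x y" ..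
  qed (use C J O in auto)
  also have "\<dots> = transpose_mat (P * J) * B * (P * J)"
    unfolding PBP by (rule transpose_mult_congruence[OF B P J, symmetric])
  finally have "C = transpose_mat (P * J) * B * (P * J)" .
  moreover have "P * J \<in> carrier_mat n (dim_row C)" using P J unfolding k_def by simp
  ultimately show thesis using that by blast
qed

lemma ql_subform_qf_ofE:
  fixes B :: "'a::field mat"
  assumes "ql_subform (k, p) (qf_of B)"
  obtains m P where "dim_row B = k + m" and "P \<in> carrier_mat (k + m) (k + m)" and "invertible_mat P"
    and "\<And>w. w \<in> carrier_vec k \<Longrightarrow> p w = bil_eval B (P *\<^sub>v (w @\<^sub>v 0\<^sub>v m)) (P *\<^sub>v (w @\<^sub>v 0\<^sub>v m))"
proof -
  obtain Sigma where ql: "quasilinear Sigma" and iso: "qf_iso (qf_of B) (qf_osum (k, p) Sigma)"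
    using assms unfolding ql_subform_def by blast
  obtain m s where Sigma: "Sigma = (m, s)" by (cases Sigma)
  have n: "dim_row B = k + m"
    using iso unfolding qf_iso_def qf_of_def qf_osum_def Sigma by simp
  then obtain P where P: "P \<in> carrier_mat (k + m) (k + m)" "invertible_mat P"
    and hP: "\<And>v. v \<in> carrier_vec (k + m) \<Longrightarrow>
      p (vec k (\<lambda>i. v $ i)) + s (vec m (\<lambda>i. v $ (k + i))) = bil_eval B (P *\<^sub>v v) (P *\<^sub>v v)"
    using iso unfolding qf_iso_def qf_of_def qf_osum_def Sigma by auto
  have "s (0\<^sub>v m + 0\<^sub>v m) = s (0\<^sub>v m) + s (0\<^sub>v m)"
    using ql zero_carrier_vec unfolding quasilinear_def Sigma by blast
  then have "s (0\<^sub>v m) + s (0\<^sub>v m) = s (0\<^sub>v m)" by simp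
  then have s0: "s (0\<^sub>v m) = 0" by (metis add_cancel_left_right)
  show thesis
  proof (rule that[OF n P])
    fix w :: "'a vec" assume w: "w \<in> carrier_vec k"
    have "vec k (\<lambda>i. (w @\<^sub>v 0\<^sub>v m) $ i) = w" and "vec m (\<lambda>i. (w @\<^sub>v 0\<^sub>v m) $ (k + i)) = 0\<^sub>v m"
      using w by (auto intro!: eq_vecI)
    then show "p w = bil_eval B (P *\<^sub>v (w @\<^sub>v 0\<^sub>v m)) (P *\<^sub>v (w @\<^sub>v 0\<^sub>v m))"
      using hP[of "w @\<^sub>v 0\<^sub>v m"] w s0 by simp
  qed
qed

lemma bil_subform_exists:
  fixes B :: "'a::field mat"
  assumes sB: "sym_bil_form B" and aniso: "bil_anisotropic B" and sub: "ql_subform phi (qf_of B)"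
  obtains C where "bil_subform C B" and "qf_iso (qf_of C) phi"
proof -
  obtain k p where phi: "phi = (k, p)" by (cases phi)
  obtain m P where n: "dim_row B = k + m" and P: "P \<in> carrier_mat (k + m) (k + m)" "invertible_mat P"
    and p: "\<And>w. w \<in> carrier_vec k \<Longrightarrow> p w = bil_eval B (P *\<^sub>v (w @\<^sub>v 0\<^sub>v m)) (P *\<^sub>v (w @\<^sub>v 0\<^sub>v m))"
    using ql_subform_qf_ofE[OF sub[unfolded phi]] by metis
  have B: "B \<in> carrier_mat (k + m) (k + m)" using sB n unfolding sym_bil_form_def by simp
  define M where "M = transpose_mat P * B * P"
  have isoM: "bil_iso B M" unfolding M_def by (rule bil_iso_congruence[OF B P])
  have "M \<in> carrier_mat (k + m) (k + m)" and "transpose_mat M = M"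
    using sym_bil_form_bil_iso[OF sB isoM] B P unfolding sym_bil_form_def M_def by auto
  then obtain C X E where C: "C \<in> carrier_mat k k" and X: "X \<in> carrier_mat k m"
    and E: "E \<in> carrier_mat m m" and "transpose_mat C = C"
    and M: "M = four_block_mat C X (transpose_mat X) E"
    by (rule sym_mat_four_blockE)
  have Xt: "transpose_mat X \<in> carrier_mat m k" using X by simp
  have "bil_anisotropic C"
    using bil_anisotropic_four_block_upper_left[OF C X Xt E] bil_anisotropic_congruence[OF B aniso P]
    unfolding M_def[symmetric] M by simp
  then obtain E' where E': "E' \<in> carrier_mat m m"
    and "bil_iso M (four_block_mat C (0\<^sub>m k m) (0\<^sub>m m k) E')"
    unfolding M by (rule sym_four_block_mat_split[OF C X E \<open>transpose_mat C = C\<close>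
        bil_anisotropic_imp_det_nonzero[OF C]])
  then have iso: "bil_iso B (bil_osum C E')"
    using bil_iso_trans[OF B isoM] C E' unfolding bil_osum_def by simp
  then have "sym_bil_form C" "sym_bil_form E'"
    using sym_bil_form_bil_osum[OF C E'] sym_bil_form_bil_iso[OF sB] by blast+
  with iso have "bil_subform C B" unfolding bil_subform_def by blast
  moreover have "bil_eval C w w = p w" if w: "w \<in> carrier_vec k" for w
  proof -
    have "bil_eval C w w = bil_eval M (w @\<^sub>v 0\<^sub>v m) (w @\<^sub>v 0\<^sub>v m)"
      unfolding M by (rule bil_eval_four_block_append_zero[OF C X Xt E w w, symmetric])
    also have "\<dots> = p w"
      unfolding M_def using bil_eval_congruence[OF B P(1)] p[OF w] w by simp
    finally show ?thesis .
  qed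
  then have "qf_iso (qf_of C) phi"
    unfolding qf_of_def phi using qf_iso_eq_on_carrier[of k p "\<lambda>v. bil_eval C v v"] C by simp
  ultimately show thesis by (rule that)
qed

section \<open>Uniqueness in characteristic two\<close>

lemma CHAR_2_add_self:
  assumes "CHAR('a::field) = 2"
  shows "(a::'a) + a = 0"
proof -
  have "(2::'a) = 0" using of_nat_CHAR[where 'a='a] assms by simp
  then show ?thesis by (metis mult_2 mult_zero_left)
qed

lemma bil_eval_diag_add:
  fixes B :: "'a::field mat"
  assumes "CHAR('a) = 2" and B: "B \<in> carrier_mat n n" and sym: "transpose_mat B = B"
    and x: "x \<in> carrier_vec n" and y: "y \<in> carrier_vec n"
  shows "bil_eval B (x + y) (x + y) = bil_eval B x x + bil_eval B y y"
proof -
  have "bil_eval B (x + y) (x + y)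
      = bil_eval B x x + bil_eval B y y + (bil_eval B x y + bil_eval B y x)"
    using B x y by (simp add: bil_eval_def mult_add_distrib_mat_vec add_scalar_prod_distrib[of _ n]
        scalar_prod_add_distrib[of _ n] algebra_simps)
  then show ?thesis using bil_eval_sym[OF B sym x y] CHAR_2_add_self[OF assms(1)] by simp
qed

lemma bil_eval_diag_inj:
  fixes B :: "'a::field mat"
  assumes char: "CHAR('a) = 2" and "sym_bil_form B" and aniso: "bil_anisotropic B"
    and x: "x \<in> carrier_vec (dim_row B)" and y: "y \<in> carrier_vec (dim_row B)"
    and eq: "bil_eval B x x = bil_eval B y y"
  shows "x = y"
proof -
  have B: "B \<in> carrier_mat (dim_row B) (dim_row B)" and sym: "transpose_mat B = B"
    using assms(2) by (auto simp: sym_bil_form_def)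
  have "bil_eval B (x + y) (x + y) = 0"
    using bil_eval_diag_add[OF char B sym x y] eq CHAR_2_add_self[OF char] by simp
  moreover have "x + y \<in> carrier_vec (dim_row B)" using x y by simp
  ultimately have sum0: "x + y = 0\<^sub>v (dim_row B)"
    using aniso unfolding bil_anisotropic_def by blast
  show ?thesis
  proof (rule eq_vecI)
    fix i assume "i < dim_vec y"
    then have xy0: "x $ i + y $ i = 0" using arg_cong[OF sum0, of "\<lambda>v. v $ i"] x y by simp
    have "x $ i = (x $ i + y $ i) + y $ i"
      using CHAR_2_add_self[OF char, of "y $ i"] by (simp add: add.assoc)
    then show "x $ i = y $ i" using xy0 by simp
  qed (use x y in simp)
qed

lemma bil_subform_unique:
  fixes B :: "'a::field mat"
  assumes char: "CHAR('a) = 2" and sB: "sym_bil_form B" and aniso: "bil_anisotropic B"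
    and sC: "bil_subform C B" and sD: "bil_subform D B" and iso: "qf_iso (qf_of C) (qf_of D)"
  shows "bil_iso C D"
proof -
  define n where "n = dim_row B"
  define k where "k = dim_row C"
  have B: "B \<in> carrier_mat n n" using sB unfolding sym_bil_form_def n_def by simp
  have k: "dim_row D = k" using iso unfolding qf_iso_def qf_of_def k_def by simp
  obtain P where P: "P \<in> carrier_mat k k" "invertible_mat P"
    and qD: "\<And>v. v \<in> carrier_vec k \<Longrightarrow> bil_eval D v v = bil_eval C (P *\<^sub>v v) (P *\<^sub>v v)"
    using iso unfolding qf_iso_def qf_of_def fst_conv snd_conv k_def by blast
  obtain G where G: "G \<in> carrier_mat n k" and CG: "C = transpose_mat G * B * G"
    using bil_subform_gram[OF sC B] unfolding k_def by metis
  obtain H where H: "H \<in> carrier_mat n k" and DH: "D = transpose_mat H * B * H"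
    using bil_subform_gram[OF sD B] unfolding k by metis
  have "H = G * P"
  proof (rule mat_eq_if_mult_mat_vec_eq[of _ n k])
    fix v :: "'a vec" assume v: "v \<in> carrier_vec k"
    have "bil_eval B (H *\<^sub>v v) (H *\<^sub>v v) = bil_eval C (P *\<^sub>v v) (P *\<^sub>v v)"
      using qD[OF v] bil_eval_congruence[OF B H v v] unfolding DH by simp
    also have "\<dots> = bil_eval B ((G * P) *\<^sub>v v) ((G * P) *\<^sub>v v)"
      unfolding CG using bil_eval_congruence[OF B G, of "P *\<^sub>v v" "P *\<^sub>v v"] G P v by simp
    finally show "H *\<^sub>v v = (G * P) *\<^sub>v v"
      using bil_eval_diag_inj[OF char sB aniso] G H P v unfolding n_def[symmetric] by simp
  qed (use G H P in auto)
  have "D = transpose_mat P * C * P"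
    unfolding DH CG \<open>H = G * P\<close> by (rule transpose_mult_congruence[OF B G P(1)])
  then show ?thesis using bil_iso_congruence[OF _ P] B G unfolding CG by simp
qed

theorem lemma3p2:
  fixes B :: "'a::field mat" and phi :: "'a qform"
  assumes "CHAR('a) = 2"
    and "sym_bil_form B"
    and "bil_anisotropic B"
    and "ql_subform phi (qf_of B)"
  shows "(\<exists>C. bil_subform C B \<and> qf_iso (qf_of C) phi) \<and>
         (\<forall>C D. bil_subform C B \<and> qf_iso (qf_of C) phi \<and>
                bil_subform D B \<and> qf_iso (qf_of D) phi \<longrightarrow> bil_iso C D)"
proof (intro conjI allI impI)
  show "\<exists>C. bil_subform C B \<and> qf_iso (qf_of C) phi"
    using bil_subform_exists[OF assms(2-4)] by blast
next
  fix C D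
  assume "bil_subform C B \<and> qf_iso (qf_of C) phi \<and> bil_subform D B \<and> qf_iso (qf_of D) phi"
  then show "bil_iso C D"
    using bil_subform_unique[OF assms(1-3)] qf_iso_trans qf_iso_sym by blast
qed

end
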